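(* Let $\lambda$ be a composition of $n$ and $a<b$ two peaks of $\lambda$. Then $$\mathbb{P}_\lambda(1\in\lambda_{>a,<b})\le2\,\frac{b-a}{n}.$$
   Context: A composition $\lambda$ of $n$ is encoded by its descent set $D_\lambda\subset[1,n-1]$; a cell $i\in[1,n]$ is a peak if $i\in D_\lambda\cup\{n\}$ and $i-1\notin D_\lambda$. $\mathbb{P}_\lambda(1\in\lambda_{>a,<b})$ is the probability that, for $\sigma$ uniform on $\{\sigma\in\mathfrak{S}_n: des(\sigma)=D_\lambda\}$ ($des(\sigma)=\{i:\sigma(i+1)<\sigma(i)\}$), the position $\sigma^{-1}(1)$ of the letter $1$ satisfies $a<\sigma^{-1}(1)<b$. *)

theory Defs
  imports Complex_Main "HOL-Combinatorics.Permutations"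
begin

definition des :: "nat \<Rightarrow> (nat \<Rightarrow> nat) \<Rightarrow> nat set" where
  "des n \<sigma> = {i \<in> {1..<n}. \<sigma> (Suc i) < \<sigma> i}"

definition perms_des :: "nat \<Rightarrow> nat set \<Rightarrow> (nat \<Rightarrow> nat) set" where
  "perms_des n D = {\<sigma>. \<sigma> permutes {1..n} \<and> des n \<sigma> = D}"

text \<open>Composition of n encoded by its descent set D, a subset of [1,n-1].\<close>
definition is_composition_des :: "nat \<Rightarrow> nat set \<Rightarrow> bool" where
  "is_composition_des n D \<longleftrightarrow> D \<subseteq> {1..n-1}"

definition is_peak :: "nat \<Rightarrow> nat set \<Rightarrow> nat \<Rightarrow> bool" where
  "is_peak n D i \<longleftrightarrow> i \<in> {1..n} \<and> i \<in> D \<union> {n} \<and> i - 1 \<notin> D"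

definition prob_one_between :: "nat \<Rightarrow> nat set \<Rightarrow> nat \<Rightarrow> nat \<Rightarrow> real" where
  "prob_one_between n D a b =
     real (card {\<sigma> \<in> perms_des n D. a < inv \<sigma> 1 \<and> inv \<sigma> 1 < b}) / real (card (perms_des n D))"

end

theory Submission
  imports Defs
begin

text \<open>Let \<open>B = {a..b}\<close> be the block between the two peaks, and let \<open>t \<in> \<sigma> ` B\<close> be a value
  placed in the block. If \<open>t + 1\<close> is placed outside \<open>B\<close>, exchanging the values \<open>t\<close> and \<open>t + 1\<close>
  does not change the descent set: the two values could only sit in adjacent cells across
  the boundary of \<open>B\<close>, which the peak conditions at \<open>a\<close> and \<open>b\<close> forbid. Iterating this move
  for \<open>t = 1, \<dots>, m\<close> injects the permutations with \<open>1\<close> in \<open>B\<close> into those with \<open>m + 1\<close> in \<open>B\<close>,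
  for every \<open>m < n\<close>. Summing over \<open>m\<close> and double counting, \<open>n\<close> times the number of
  permutations with \<open>1\<close> in \<open>B\<close> is at most \<open>|B| = b - a + 1 \<le> 2 (b - a)\<close> times their total number.\<close>

definition block_raise_step :: "nat set \<Rightarrow> nat \<Rightarrow> (nat \<Rightarrow> nat) \<Rightarrow> nat \<Rightarrow> nat" where
  "block_raise_step B t \<sigma> = (if Suc t \<in> \<sigma> ` B then \<sigma> else transpose t (Suc t) \<circ> \<sigma>)"

fun block_raise :: "nat set \<Rightarrow> nat \<Rightarrow> (nat \<Rightarrow> nat) \<Rightarrow> nat \<Rightarrow> nat" where
  "block_raise B 0 \<sigma> = \<sigma>"
| "block_raise B (Suc m) \<sigma> = block_raise_step B (Suc m) (block_raise B m \<sigma>)"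

lemma in_transpose_comp_image_iff:
  "u \<in> (\<lambda>x. transpose t s (\<sigma> x)) ` B \<longleftrightarrow> transpose t s u \<in> \<sigma> ` B"
  by (metis (no_types) image_image in_transpose_image_iff)

lemma block_raise_step_hits:
  "t \<in> \<sigma> ` B \<Longrightarrow> Suc t \<in> block_raise_step B t \<sigma> ` B"
  by (simp add: block_raise_step_def in_transpose_comp_image_iff)

lemma inj_on_block_raise_step:
  "inj_on (block_raise_step B t) {\<sigma>. t \<in> \<sigma> ` B}"
proof (rule inj_on_inverseI)
  fix \<sigma> assume "\<sigma> \<in> {\<sigma>. t \<in> \<sigma> ` B}"
  then show "(\<lambda>\<tau>. if t \<in> \<tau> ` B then \<tau> else transpose t (Suc t) \<circ> \<tau>) (block_raise_step B t \<sigma>) = \<sigma>"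
    by (auto simp: block_raise_step_def in_transpose_comp_image_iff fun_eq_iff)
qed

lemma block_raise_hits:
  "1 \<in> \<sigma> ` B \<Longrightarrow> Suc m \<in> block_raise B m \<sigma> ` B"
  by (induction m) (auto intro: block_raise_step_hits)

lemma inj_on_block_raise:
  "inj_on (block_raise B m) {\<sigma>. 1 \<in> \<sigma> ` B}"
proof (induction m)
  case 0
  then show ?case by simp
next
  case (Suc m)
  have "block_raise B m ` {\<sigma>. 1 \<in> \<sigma> ` B} \<subseteq> {\<tau>. Suc m \<in> \<tau> ` B}"
    using block_raise_hits by blast
  then have "inj_on (block_raise_step B (Suc m)) (block_raise B m ` {\<sigma>. 1 \<in> \<sigma> ` B})"
    using inj_on_subset inj_on_block_raise_step by blast
  with Suc.IH show ?case
    by (simp add: comp_inj_on [unfolded comp_def])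
qed

lemma transpose_Suc_less_iff:
  "{u, v} \<noteq> {t, Suc t} \<Longrightarrow> transpose t (Suc t) u < transpose t (Suc t) v \<longleftrightarrow> u < v"
  by (auto simp: transpose_def doubleton_eq_iff)

lemma des_transpose_Suc_comp:
  assumes "\<And>i. i \<in> {1..<n} \<Longrightarrow> {\<sigma> (Suc i), \<sigma> i} \<noteq> {t, Suc t}"
  shows "des n (transpose t (Suc t) \<circ> \<sigma>) = des n \<sigma>"
  using assms transpose_Suc_less_iff by (auto simp: des_def)

lemma block_raise_step_in_perms_des:
  assumes \<sigma>: "\<sigma> \<in> perms_des n D" and t: "t \<in> \<sigma> ` {a..b}" "1 \<le> t" "t < n"
    and a: "1 \<le> a" "a - 1 \<notin> D" and b: "b \<le> n" "b \<in> D \<union> {n}"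
  shows "block_raise_step {a..b} t \<sigma> \<in> perms_des n D"
proof (cases "Suc t \<in> \<sigma> ` {a..b}")
  case True
  with \<sigma> show ?thesis by (simp add: block_raise_step_def)
next
  case outside: False
  have perm: "\<sigma> permutes {1..n}" and desD: "des n \<sigma> = D"
    using \<sigma> by (auto simp: perms_des_def)
  obtain p where p: "p \<in> {a..b}" "\<sigma> p = t" using t(1) by auto
  have pos_t: "i = p" if "i \<in> {1..n}" "\<sigma> i = t" for i
    using inj_onD [OF permutes_inj_on [OF perm]] that p a b by auto
  have not_adjacent: "{\<sigma> (Suc i), \<sigma> i} \<noteq> {t, Suc t}" if i: "i \<in> {1..<n}" for i
  proof
    assume "{\<sigma> (Suc i), \<sigma> i} = {t, Suc t}"
    then consider "\<sigma> i = t" "\<sigma> (Suc i) = Suc t" | "\<sigma> (Suc i) = t" "\<sigma> i = Suc t"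
      by (auto simp: doubleton_eq_iff)
    then show False
    proof cases
      case 1
      have "i = p" using pos_t i 1 by auto
      moreover have "Suc i \<notin> {a..b}" using outside 1 by (metis image_eqI)
      ultimately have "i = b" using p by auto
      with i b have "b \<in> des n \<sigma>" using desD by auto
      with 1 \<open>i = b\<close> show False by (simp add: des_def)
    next
      case 2
      have "Suc i = p" using pos_t i 2 by auto
      moreover have "i \<notin> {a..b}" using outside 2 by (metis image_eqI)
      ultimately have "i = a - 1" using p by auto
      moreover have "i \<in> des n \<sigma>" using i 2 by (simp add: des_def)
      ultimately show False using a desD by simp
    qed
  qed
  have "transpose t (Suc t) \<circ> \<sigma> permutes {1..n}"
    using t(2,3) by (intro permutes_compose [OF perm permutes_swap_id]) auto
  with outside desD des_transpose_Suc_comp [of n \<sigma> t, OF not_adjacent] show ?thesis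
    by (simp add: block_raise_step_def perms_des_def)
qed

lemma block_raise_in_perms_des:
  assumes "\<sigma> \<in> perms_des n D" "1 \<in> \<sigma> ` {a..b}" "m < n"
    and "1 \<le> a" "a - 1 \<notin> D" "b \<le> n" "b \<in> D \<union> {n}"
  shows "block_raise {a..b} m \<sigma> \<in> perms_des n D"
  using \<open>m < n\<close>
proof (induction m)
  case 0
  with assms show ?case by simp
next
  case (Suc m)
  have "block_raise {a..b} m \<sigma> \<in> perms_des n D" using Suc by simp
  moreover have "Suc m \<in> block_raise {a..b} m \<sigma> ` {a..b}"
    using block_raise_hits assms(2) .
  ultimately show ?case
    using block_raise_step_in_perms_des [of _ n D "Suc m" a b] assms(4-7) Suc.prems by simp
qed

lemma finite_perms_des: "finite (perms_des n D)"
  by (rule finite_subset [OF _ finite_permutations [of "{1..n}"]]) (auto simp: perms_des_def)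

lemma card_one_in_block_le:
  assumes "m < n" "1 \<le> a" "a - 1 \<notin> D" "b \<le> n" "b \<in> D \<union> {n}"
  shows "card {\<sigma> \<in> perms_des n D. 1 \<in> \<sigma> ` {a..b}}
           \<le> card {\<sigma> \<in> perms_des n D. Suc m \<in> \<sigma> ` {a..b}}"
proof (rule card_inj_on_le)
  show "inj_on (block_raise {a..b} m) {\<sigma> \<in> perms_des n D. 1 \<in> \<sigma> ` {a..b}}"
    by (rule inj_on_subset [OF inj_on_block_raise]) auto
  show "block_raise {a..b} m ` {\<sigma> \<in> perms_des n D. 1 \<in> \<sigma> ` {a..b}}
          \<subseteq> {\<sigma> \<in> perms_des n D. Suc m \<in> \<sigma> ` {a..b}}"
  proof (intro image_subsetI CollectI conjI)
    fix \<sigma> assume "\<sigma> \<in> {\<sigma> \<in> perms_des n D. 1 \<in> \<sigma> ` {a..b}}"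
    then show "block_raise {a..b} m \<sigma> \<in> perms_des n D" "Suc m \<in> block_raise {a..b} m \<sigma> ` {a..b}"
      using assms by (simp_all add: block_raise_in_perms_des block_raise_hits)
  qed
qed (simp add: finite_perms_des)

lemma sum_card_values_in_image_le:
  fixes P :: "('a \<Rightarrow> 'b) set"
  assumes "finite P" "finite V" "finite B"
  shows "(\<Sum>v\<in>V. card {\<sigma> \<in> P. v \<in> \<sigma> ` B}) \<le> card B * card P"
proof -
  have "(\<Sum>v\<in>V. card {\<sigma> \<in> P. v \<in> \<sigma> ` B}) = (\<Sum>v\<in>V. \<Sum>\<sigma>\<in>P. if v \<in> \<sigma> ` B then 1 else 0)"
    using assms(1) by (simp add: sum.If_cases Int_def)
  also have "\<dots> = (\<Sum>\<sigma>\<in>P. card (V \<inter> \<sigma> ` B))"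
    using assms(2) by (subst sum.swap) (simp add: sum.If_cases)
  also have "\<dots> \<le> (\<Sum>\<sigma>\<in>P. card B)"
    using assms(3) by (intro sum_mono) (meson card_image_le card_mono finite_imageI inf_le2 le_trans)
  finally show ?thesis by (simp add: mult.commute)
qed

lemma card_one_in_block_mult_le:
  assumes "1 \<le> a" "a - 1 \<notin> D" "b \<le> n" "b \<in> D \<union> {n}"
  shows "n * card {\<sigma> \<in> perms_des n D. 1 \<in> \<sigma> ` {a..b}} \<le> (Suc b - a) * card (perms_des n D)"
proof -
  have "n * card {\<sigma> \<in> perms_des n D. 1 \<in> \<sigma> ` {a..b}}
          = (\<Sum>m<n. card {\<sigma> \<in> perms_des n D. 1 \<in> \<sigma> ` {a..b}})" by simp
  also have "\<dots> \<le> (\<Sum>m<n. card {\<sigma> \<in> perms_des n D. Suc m \<in> \<sigma> ` {a..b}})"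
    by (rule sum_mono, rule card_one_in_block_le [OF _ assms]) simp
  also have "\<dots> = (\<Sum>v\<in>Suc ` {..<n}. card {\<sigma> \<in> perms_des n D. v \<in> \<sigma> ` {a..b}})"
    by (simp add: sum.reindex)
  also have "\<dots> \<le> (Suc b - a) * card (perms_des n D)"
    using sum_card_values_in_image_le [OF finite_perms_des, of "Suc ` {..<n}" "{a..b}"] by simp
  finally show ?thesis .
qed

lemma one_in_image_if_inv_between:
  assumes "\<sigma> \<in> perms_des n D" "a < inv \<sigma> 1" "inv \<sigma> 1 < b"
  shows "1 \<in> \<sigma> ` {a..b}"
proof (rule image_eqI)
  show "1 = \<sigma> (inv \<sigma> 1)"
    using assms(1) permutes_inverses(1) by (fastforce simp: perms_des_def)
qed (use assms in auto)

theorem lemma22: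
  fixes n :: nat and D :: "nat set" and a b :: nat
  assumes "is_composition_des n D"
    and "is_peak n D a" and "is_peak n D b" and "a < b"
  shows "prob_one_between n D a b \<le> 2 * real (b - a) / real n"
proof -
  let ?P = "perms_des n D"
  let ?A = "{\<sigma> \<in> ?P. 1 \<in> \<sigma> ` {a..b}}"
  have block: "1 \<le> a" "a - 1 \<notin> D" "b \<le> n" "b \<in> D \<union> {n}"
    using assms(2,3) by (auto simp: is_peak_def)
  have "{\<sigma> \<in> ?P. a < inv \<sigma> 1 \<and> inv \<sigma> 1 < b} \<subseteq> ?A"
    using one_in_image_if_inv_between by blast
  then have "prob_one_between n D a b \<le> card ?A / card ?P"
    unfolding prob_one_between_def
    by (intro divide_right_mono) (auto intro: card_mono finite_subset [OF _ finite_perms_des])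
  also have "\<dots> \<le> (Suc b - a) / n"
  proof (cases "card ?P = 0")
    case False
    have "real (n * card ?A) \<le> real ((Suc b - a) * card ?P)"
      using card_one_in_block_mult_le [OF block] by (simp only: of_nat_le_iff)
    then have "real n * card ?A \<le> real (Suc b - a) * card ?P"
      by (simp only: of_nat_mult)
    moreover have "0 < real n" using \<open>a < b\<close> \<open>b \<le> n\<close> by simp
    ultimately show ?thesis
      using False by (simp add: divide_simps mult.commute)
  qed simp
  also have "\<dots> \<le> 2 * real (b - a) / n"
    using \<open>a < b\<close> by (intro divide_right_mono) (simp_all add: Suc_diff_le)
  finally show ?thesis .
qed

end
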